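(* Every Tychonoff space $X$ of countable pseudocharacter is a nowhere almost $P$-space.
   Context: $C(X)$ is the ring of real-valued continuous functions on $X$; a cozero set is a set $\{x: h(x)\neq 0\}$ with $h\in C(X)$. $T''(X)$ is the set of all functions $f\colon X\to\mathbb{R}$ for which there is a dense cozero set $U$ of $X$ with $f|_U$ continuous. $\chi_A$ is the characteristic function of $A$. $X$ is a nowhere almost $P$-space if $\chi_{\{p\}}\in T''(X)$ for all $p\in X$. $X$ has countable pseudocharacter if every singleton is a $G_\delta$-set. *)

theory Defs
  imports "HOL-Analysis.Analysis"
begin

definition tychonoff_space :: "'a topology \<Rightarrow> bool" where
  "tychonoff_space X \<longleftrightarrow> completely_regular_space X \<and> Hausdorff_space X"

definition cozero_set :: "'a topology \<Rightarrow> ('a \<Rightarrow> real) \<Rightarrow> 'a set" where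
  "cozero_set X h = {x \<in> topspace X. h x \<noteq> 0}"

definition is_cozero_set :: "'a topology \<Rightarrow> 'a set \<Rightarrow> bool" where
  "is_cozero_set X U \<longleftrightarrow> (\<exists>h. continuous_map X euclideanreal h \<and> U = cozero_set X h)"

text \<open>T''(X): functions continuous on some dense cozero set
  (only values on topspace X matter).\<close>
definition T2prime :: "'a topology \<Rightarrow> ('a \<Rightarrow> real) set" where
  "T2prime X = {f. \<exists>U. is_cozero_set X U \<and> X closure_of U = topspace X \<and>
                      continuous_map (subtopology X U) euclideanreal f}"

definition nowhere_almost_P_space :: "'a topology \<Rightarrow> bool" where
  "nowhere_almost_P_space X \<longleftrightarrow>
     (\<forall>p \<in> topspace X. (\<lambda>x. if x = p then 1 else 0) \<in> T2prime X)"

definition countable_pseudocharacter :: "'a topology \<Rightarrow> bool" where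
  "countable_pseudocharacter X \<longleftrightarrow> (\<forall>p \<in> topspace X. gdelta_in X {p})"

end

theory Submission
  imports Defs
begin

text \<open>If \<open>p\<close> is isolated, its characteristic function is continuous on all of \<open>X\<close>
  (points are closed), and \<open>X\<close> itself is a dense cozero set. Otherwise \<open>X - {p}\<close> is dense,
  and the characteristic function vanishes there; it remains to see that \<open>X - {p}\<close> is a
  cozero set. Being the complement of a \<open>G\<^sub>\<delta>\<close>-set it is a countable union of closed sets
  missing \<open>p\<close>; complete regularity puts each of them inside a cozero set missing \<open>p\<close>, and
  cozero sets are closed under countable unions (sum \<open>\<Sum> 2\<^sup>-\<^sup>n min 1 \<bar>h\<^sub>n\<bar>\<close>).\<close>

lemma is_cozero_set_topspace: "is_cozero_set X (topspace X)"
  unfolding is_cozero_set_def cozero_set_def by (intro exI[of _ "\<lambda>x. 1"]) auto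

lemma continuous_map_imp_T2prime:
  assumes "continuous_map X euclideanreal f"
  shows "f \<in> T2prime X"
  unfolding T2prime_def using assms is_cozero_set_topspace
  by (intro CollectI exI[of _ "topspace X"]) (auto simp: subtopology_topspace)

lemma continuous_map_real_suminf:
  assumes "\<And>n. continuous_map X euclideanreal (f n)"
    and "\<And>n x. x \<in> topspace X \<Longrightarrow> \<bar>f n x\<bar> \<le> M n"
    and "summable M"
  shows "continuous_map X euclideanreal (\<lambda>x. \<Sum>n. f n x)"
proof -
  have "uniform_limit (topspace X) (\<lambda>k x. \<Sum>n<k. f n x) (\<lambda>x. \<Sum>n. f n x) sequentially"
    using assms(2,3) by (intro Weierstrass_m_test) auto
  moreover have "continuous_map X euclideanreal (\<lambda>x. \<Sum>n<k. f n x)" for k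
    by (simp add: continuous_map_sum assms(1))
  ultimately have "continuous_map X Met_TC.mtopology (\<lambda>x. \<Sum>n. f n x)"
    by (intro Met_TC.continuous_map_uniform_limit[where F = sequentially])
       (auto dest: uniform_limitD)
  then show ?thesis by simp
qed

lemma is_cozero_set_UN:
  assumes "\<And>n::nat. is_cozero_set X (W n)"
  shows "is_cozero_set X (\<Union>n. W n)"
proof -
  obtain h where h: "\<And>n. continuous_map X euclideanreal (h n)"
    and W: "\<And>n. W n = cozero_set X (h n)"
    using assms unfolding is_cozero_set_def by metis
  define g where "g x = (\<Sum>n. (1/2) ^ n * min 1 \<bar>h n x\<bar>)" for x
  have "continuous_map X euclideanreal g"
    unfolding g_def
  proof (rule continuous_map_real_suminf)
    show "continuous_map X euclideanreal (\<lambda>x. (1/2) ^ n * min 1 \<bar>h n x\<bar>)" for n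
      using h[of n] by (intro continuous_intros) auto
    show "\<bar>(1/2) ^ n * min 1 \<bar>h n x\<bar>\<bar> \<le> (1/2::real) ^ n" for n x
      by (simp add: abs_mult)
  qed (simp add: summable_geometric)
  moreover have "g x \<noteq> 0 \<longleftrightarrow> (\<exists>n. h n x \<noteq> 0)" for x
  proof -
    have "summable (\<lambda>n. (1/2::real) ^ n * min 1 \<bar>h n x\<bar>)"
      by (rule summable_comparison_test[OF _ summable_geometric[of "1/2::real"]]) auto
    then show ?thesis
      unfolding g_def by (subst suminf_eq_zero_iff) (auto simp: min_def)
  qed
  ultimately show ?thesis
    unfolding is_cozero_set_def W cozero_set_def by (intro exI[of _ g]) auto
qed

lemma is_cozero_set_countable_Union:
  assumes "countable \<W>" and "\<And>W. W \<in> \<W> \<Longrightarrow> is_cozero_set X W"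
  shows "is_cozero_set X (\<Union>\<W>)"
proof (cases "\<W> = {}")
  case True
  then show ?thesis
    unfolding is_cozero_set_def cozero_set_def by (intro exI[of _ "\<lambda>x. 0"]) auto
next
  case False
  then have "\<Union>\<W> = (\<Union>n. from_nat_into \<W> n)"
    using assms(1) by (metis range_from_nat_into)
  then show ?thesis
    using False assms by (metis is_cozero_set_UN from_nat_into)
qed

lemma completely_regular_cozero_separation:
  assumes "completely_regular_space X" and "closedin X C" and "p \<in> topspace X - C"
  obtains W where "is_cozero_set X W" and "C \<subseteq> W" and "p \<notin> W"
proof -
  obtain f where f: "continuous_map X euclideanreal f" "f p = 0" "f ` C \<subseteq> {1}"
    using assms unfolding completely_regular_space_alt by blast
  show thesis
  proof (rule that)
    show "is_cozero_set X (cozero_set X f)"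
      using f(1) unfolding is_cozero_set_def by blast
    show "C \<subseteq> cozero_set X f"
      using closedin_subset[OF assms(2)] f(3) by (force simp: cozero_set_def)
    show "p \<notin> cozero_set X f"
      using f(2) by (simp add: cozero_set_def)
  qed
qed

lemma is_cozero_set_Diff_gdelta_singleton:
  assumes "completely_regular_space X" and "gdelta_in X {p}"
  shows "is_cozero_set X (topspace X - {p})"
proof -
  obtain \<C> where "countable \<C>" and closed: "\<And>C. C \<in> \<C> \<Longrightarrow> closedin X C"
    and Union: "\<Union>\<C> = topspace X - {p}"
    using assms(2) unfolding gdelta_in_fsigma_in fsigma_in_def union_of_def by auto
  have "\<exists>W. is_cozero_set X W \<and> C \<subseteq> W \<and> p \<notin> W" if C: "C \<in> \<C>" for C
  proof -
    have "p \<in> topspace X - C"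
      using gdelta_in_subset[OF assms(2)] Union C by blast
    then obtain W where "is_cozero_set X W" "C \<subseteq> W" "p \<notin> W"
      by (rule completely_regular_cozero_separation[OF assms(1) closed[OF C]])
    then show ?thesis by blast
  qed
  then obtain W where W: "\<And>C. C \<in> \<C> \<Longrightarrow> is_cozero_set X (W C) \<and> C \<subseteq> W C \<and> p \<notin> W C"
    by metis
  have cover: "C \<subseteq> W C" and inside: "W C \<subseteq> topspace X - {p}" if "C \<in> \<C>" for C
    using W[OF that] by (auto simp: is_cozero_set_def cozero_set_def)
  have "topspace X - {p} = \<Union>(W ` \<C>)"
  proof
    show "topspace X - {p} \<subseteq> \<Union>(W ` \<C>)"
      unfolding Union[symmetric] using cover by blast
    show "\<Union>(W ` \<C>) \<subseteq> topspace X - {p}"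
      using inside by blast
  qed
  moreover have "is_cozero_set X (\<Union>(W ` \<C>))"
    using \<open>countable \<C>\<close> W by (intro is_cozero_set_countable_Union) auto
  ultimately show ?thesis by simp
qed

lemma continuous_map_indicator_clopen:
  assumes "closedin X S" and "openin X S"
  shows "continuous_map X euclideanreal (\<lambda>x. if x \<in> S then 1 else 0 :: real)"
proof -
  have "X frontier_of S = {}"
    using assms closedin_subset[OF assms(1)] by (simp add: frontier_of_eq_empty)
  then show ?thesis
    by (intro continuous_map_cases) auto
qed

theorem proposition4p1:
  fixes X :: "'a topology"
  assumes "tychonoff_space X" and "countable_pseudocharacter X"
  shows "nowhere_almost_P_space X"
  unfolding nowhere_almost_P_space_def
proof
  fix p assume p: "p \<in> topspace X"
  have "completely_regular_space X" and "Hausdorff_space X"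
    using assms(1) by (auto simp: tychonoff_space_def)
  show "(\<lambda>x. if x = p then 1 else 0) \<in> T2prime X"
  proof (cases "openin X {p}")
    case True
    moreover have "closedin X {p}"
      using \<open>Hausdorff_space X\<close> p by (meson Hausdorff_imp_t1_space closedin_t1_singleton)
    ultimately have "continuous_map X euclideanreal (\<lambda>x. if x = p then 1 else 0)"
      using continuous_map_indicator_clopen[of X "{p}"] by simp
    then show ?thesis
      by (rule continuous_map_imp_T2prime)
  next
    case False
    then have "X interior_of {p} = {}"
      by (metis interior_of_subset openin_interior_of subset_singleton_iff)
    then have "X closure_of (topspace X - {p}) = topspace X"
      by (simp add: closure_of_complement)
    moreover have "is_cozero_set X (topspace X - {p})"
      using \<open>completely_regular_space X\<close> assms(2) p
      by (intro is_cozero_set_Diff_gdelta_singleton)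
        (auto simp: countable_pseudocharacter_def)
    moreover have "continuous_map (subtopology X (topspace X - {p})) euclideanreal
        (\<lambda>x. if x = p then 1 else 0)"
      by (rule continuous_map_eq[of _ _ "\<lambda>x. 0"]) auto
    ultimately show ?thesis
      unfolding T2prime_def by blast
  qed
qed

end
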